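(* Let $c,d\in\mathbb{Z}$ and $T=T(c,d,0,0)$, i.e. $T_{r,k}=c+rkd$ for all $r,k\ge 0$. Then for all $r\ge 1$ and $k\ge 2$, $$T_{r,k}=T_{r-1,k-1}+T_{0,r+k-2}+T_{1,r+k-3}+2(d-c).$$
   Context: A number triangle is an array of integers $T_{r,k}$ indexed by integers $r,k\ge 0$. For $c,d,d_1,d_2\in\mathbb{Z}$, the Generalized Rascal Triangle $T(c,d,d_1,d_2)$ is the number triangle with $T_{r,k}=c+kd_1+rd_2+rkd$. *)

theory Defs
  imports Main
begin

definition GRT :: "int \<Rightarrow> int \<Rightarrow> int \<Rightarrow> int \<Rightarrow> nat \<Rightarrow> nat \<Rightarrow> int" where
  "GRT c d d1 d2 r k = c + int k * d1 + int r * d2 + int r * int k * d"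

end

theory Submission
  imports Defs
begin

text \<open>After the shift \<open>r = a + 1\<close>, \<open>k = b + 2\<close> the
  coefficients of \<open>d\<close> match because \<open>(a + 1)(b + 2) = a (b + 1) + (a + b) + 2\<close>, and the
  three copies of \<open>c\<close> on the right are balanced by \<open>-2c\<close>.\<close>

lemma GRT_shifted_recurrence:
  "GRT c d 0 0 (Suc a) (Suc (Suc b))
     = GRT c d 0 0 a (Suc b) + GRT c d 0 0 0 (Suc (a + b))
       + GRT c d 0 0 1 (a + b) + 2 * (d - c)"
  by (simp add: GRT_def algebra_simps)

theorem mainTheorem13:
  fixes c d :: int and r k :: nat
  assumes "r \<ge> 1" and "k \<ge> 2"
  shows "GRT c d 0 0 r k
         = GRT c d 0 0 (r - 1) (k - 1) + GRT c d 0 0 0 (r + k - 2)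
           + GRT c d 0 0 1 (r + k - 3) + 2 * (d - c)"
proof -
  define a b where "a = r - 1" and "b = k - 2"
  have r: "r = Suc a" and k: "k = Suc (Suc b)"
    using assms by (simp_all add: a_def b_def)
  show ?thesis
    using GRT_shifted_recurrence [of c d a b] by (simp add: r k)
qed

end
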